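(* Let $G=(V,E)$ be a finite connected undirected graph with probability weights $w:E\to\mathbb{R}_{>0}$ and edge values $\omega:E\to\mathbb{R}$, let $r\in V$ be arbitrary, and let $T$ be a random spanning tree of $G$ with $\Pr(T)\propto\prod_{e\in E_T}w(e)$. Define $R(T)=\sum_{e\in E_T}\omega(e)$. Then $$\mathbb{E}[R(T)]=\operatorname{Tr}\Big[L_{G\times\omega}^{[r]}\big(L_G^{[r]}\big)^{-1}\Big],$$ $$\operatorname{Var}[R(T)]=\operatorname{Tr}\Big[\Big(L_{G\times\omega^2}^{[r]}-L_{G\times\omega}^{[r]}\big(L_G^{[r]}\big)^{-1}L_{G\times\omega}^{[r]}\Big)\big(L_G^{[r]}\big)^{-1}\Big].$$
   Context: For an edge weight function $c:E\to\mathbb{R}$, its Laplacian is $L=D-A$ with $A_{ij}=c(\{i,j\})$ (zero if $\{i,j\}\notin E$) and $D$ diagonal with $D_{ii}=\sum_jA_{ij}$. $L_G$, $L_{G\times\omega}$, $L_{G\times\omega^2}$ are the Laplacians for the edge weights $w(e)$, $w(e)\omega(e)$ and $w(e)\omega(e)^2$ respectively. For a matrix $M$ indexed by $V$, $M^{[r]}$ denotes $M$ with the row and column indexed by $r$ removed; $\operatorname{Tr}$ is the trace. *)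

theory Defs
  imports Complex_Main
begin

definition simple_graph :: "'a set \<Rightarrow> 'a set set \<Rightarrow> bool" where
  "simple_graph V E \<longleftrightarrow> finite V \<and>
     (\<forall>e\<in>E. \<exists>u v. u \<in> V \<and> v \<in> V \<and> u \<noteq> v \<and> e = {u, v})"

definition adj :: "'a set set \<Rightarrow> 'a \<Rightarrow> 'a \<Rightarrow> bool" where
  "adj F u v \<longleftrightarrow> u \<noteq> v \<and> {u, v} \<in> F"

definition reach :: "'a set set \<Rightarrow> 'a \<Rightarrow> 'a \<Rightarrow> bool" where
  "reach F = (adj F)\<^sup>*\<^sup>*"

definition connected_graph :: "'a set \<Rightarrow> 'a set set \<Rightarrow> bool" where
  "connected_graph V F \<longleftrightarrow> (\<forall>u\<in>V. \<forall>v\<in>V. reach F u v)"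

text \<open>Acyclic: no edge lies on a cycle, i.e. removing any edge disconnects its endpoints.\<close>
definition acyclic_graph :: "'a set set \<Rightarrow> bool" where
  "acyclic_graph F \<longleftrightarrow> (\<forall>e\<in>F. \<forall>u v. u \<noteq> v \<and> e = {u, v} \<longrightarrow> \<not> reach (F - {e}) u v)"

definition spanning_trees :: "'a set \<Rightarrow> 'a set set \<Rightarrow> 'a set set set" where
  "spanning_trees V E = {F. F \<subseteq> E \<and> connected_graph V F \<and> acyclic_graph F}"

definition tree_weight :: "('a set \<Rightarrow> real) \<Rightarrow> 'a set set \<Rightarrow> real" where
  "tree_weight w T = (\<Prod>e\<in>T. w e)"

definition R_val :: "('a set \<Rightarrow> real) \<Rightarrow> 'a set set \<Rightarrow> real" where
  "R_val \<omega> T = (\<Sum>e\<in>T. \<omega> e)"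

definition tree_expect :: "'a set \<Rightarrow> 'a set set \<Rightarrow> ('a set \<Rightarrow> real) \<Rightarrow> ('a set set \<Rightarrow> real) \<Rightarrow> real" where
  "tree_expect V E w f =
     (\<Sum>T\<in>spanning_trees V E. tree_weight w T * f T) / (\<Sum>T\<in>spanning_trees V E. tree_weight w T)"

definition tree_var :: "'a set \<Rightarrow> 'a set set \<Rightarrow> ('a set \<Rightarrow> real) \<Rightarrow> ('a set set \<Rightarrow> real) \<Rightarrow> real" where
  "tree_var V E w f = tree_expect V E w (\<lambda>T. (f T - tree_expect V E w f)\<^sup>2)"

definition mmult :: "'a set \<Rightarrow> ('a \<Rightarrow> 'a \<Rightarrow> real) \<Rightarrow> ('a \<Rightarrow> 'a \<Rightarrow> real) \<Rightarrow> ('a \<Rightarrow> 'a \<Rightarrow> real)" where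
  "mmult S A B = (\<lambda>i j. \<Sum>k\<in>S. A i k * B k j)"

definition mtrace :: "'a set \<Rightarrow> ('a \<Rightarrow> 'a \<Rightarrow> real) \<Rightarrow> real" where
  "mtrace S A = (\<Sum>i\<in>S. A i i)"

definition is_inverse_on :: "'a set \<Rightarrow> ('a \<Rightarrow> 'a \<Rightarrow> real) \<Rightarrow> ('a \<Rightarrow> 'a \<Rightarrow> real) \<Rightarrow> bool" where
  "is_inverse_on S A B \<longleftrightarrow>
     (\<forall>i\<in>S. \<forall>j\<in>S. mmult S A B i j = (if i = j then 1 else 0) \<and>
                   mmult S B A i j = (if i = j then 1 else 0))"

definition minv :: "'a set \<Rightarrow> ('a \<Rightarrow> 'a \<Rightarrow> real) \<Rightarrow> ('a \<Rightarrow> 'a \<Rightarrow> real)" where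
  "minv S A = (THE B. is_inverse_on S A B \<and> (\<forall>i j. i \<notin> S \<or> j \<notin> S \<longrightarrow> B i j = 0))"

text \<open>M^[r]: delete row and column r; as an index set this is V - {r}.\<close>
definition reduced :: "'a \<Rightarrow> ('a \<Rightarrow> 'a \<Rightarrow> real) \<Rightarrow> ('a \<Rightarrow> 'a \<Rightarrow> real)" where
  "reduced r M = (\<lambda>i j. if i = r \<or> j = r then 0 else M i j)"

definition adj_mat :: "'a set set \<Rightarrow> ('a set \<Rightarrow> real) \<Rightarrow> 'a \<Rightarrow> 'a \<Rightarrow> real" where
  "adj_mat E c i j = (if {i, j} \<in> E then c {i, j} else 0)"

definition laplacian :: "'a set \<Rightarrow> 'a set set \<Rightarrow> ('a set \<Rightarrow> real) \<Rightarrow> 'a \<Rightarrow> 'a \<Rightarrow> real" where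
  "laplacian V E c i j =
     (if i = j then (\<Sum>k\<in>V. adj_mat E c i k) else 0) - adj_mat E c i j"

end

theory Submission
  imports Defs "Jordan_Normal_Form.Determinant"
begin

text \<open>Give every edge \<open>e\<close> the polynomial weight \<open>w e (1 + s \<omega> e + s\<^sup>2 \<omega> e\<^sup>2 / 2)\<close>, i.e.
  consider the pencil \<open>L(s) = L_G + s L_{G\<times>\<omega>} + (s\<^sup>2/2) L_{G\<times>\<omega>\<^sup>2}\<close> of reduced Laplacians.
  By the weighted matrix-tree theorem,
  \<open>det L(s) = \<Sum>_T \<Prod>_{e\<in>T} w e (1 + s \<omega> e + s\<^sup>2 \<omega> e\<^sup>2 / 2) = Z (1 + s E[R] + s\<^sup>2 E[R\<^sup>2] / 2) + O(s\<^sup>3)\<close>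
  with \<open>Z = det L_G\<close>. On the other hand \<open>L(s) = (I + s P + s\<^sup>2 Q) L_G\<close> with
  \<open>P = L_{G\<times>\<omega>} L_G\<^sup>-\<^sup>1\<close> and \<open>Q = L_{G\<times>\<omega>\<^sup>2} L_G\<^sup>-\<^sup>1 / 2\<close>; in the Leibniz expansion of
  \<open>det (I + s P + s\<^sup>2 Q)\<close> only the identity and the transpositions reach order \<open>s\<^sup>2\<close>, so its
  coefficients of \<open>s\<close> and \<open>s\<^sup>2\<close> are \<open>tr P\<close> and \<open>tr Q + ((tr P)\<^sup>2 - tr (P\<^sup>2)) / 2\<close>. Comparing
  coefficients yields \<open>E[R]\<close> and \<open>E[R\<^sup>2]\<close>, hence the variance.

  The matrix-tree theorem follows by expanding each row of the reduced Laplacian over the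
  choice of a neighbour \<open>f v\<close> of every non-root vertex \<open>v\<close>: the determinant becomes
  \<open>\<Sum>_f (\<Prod>_v c {v, f v}) det (I - A_f)\<close>, where \<open>det (I - A_f)\<close> is \<open>1\<close> if \<open>f\<close> has no cycle
  and \<open>0\<close> otherwise, and the acyclic maps are exactly the parent maps of the spanning trees
  rooted at \<open>r\<close>.\<close>

lemma adj_sym: "adj F u v = adj F v u"
  unfolding adj_def by (auto simp: insert_commute)

lemma reach_refl: "reach F u u"
  unfolding reach_def by simp

lemma reach_trans: "reach F u v \<Longrightarrow> reach F v x \<Longrightarrow> reach F u x"
  unfolding reach_def by (rule rtranclp_trans)

lemma reach_sym: "reach F u v \<Longrightarrow> reach F v u"
  unfolding reach_def
proof (induction rule: rtranclp_induct)
  case (step y z)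
  then show ?case
    using adj_sym by (metis converse_rtranclp_into_rtranclp)
qed simp

lemma reach_edge: "u \<noteq> v \<Longrightarrow> {u, v} \<in> F \<Longrightarrow> reach F u v"
  unfolding reach_def adj_def by auto

lemma reach_mono: "F \<subseteq> F' \<Longrightarrow> reach F u v \<Longrightarrow> reach F' u v"
  unfolding reach_def adj_def by (erule rtranclp_mono[THEN predicate2D, rotated]) auto

lemma reach_invariant:
  assumes "reach F u v" and "P u"
    and "\<And>x y. P x \<Longrightarrow> x \<noteq> y \<Longrightarrow> {x, y} \<in> F \<Longrightarrow> P y"
  shows "P v"
  using assms(1) unfolding reach_def
  by (induction rule: rtranclp_induct) (use assms(2,3) in \<open>auto simp: adj_def\<close>)

definition hop_dist :: "'a set set \<Rightarrow> 'a \<Rightarrow> 'a \<Rightarrow> nat" where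
  "hop_dist F u v = (LEAST k. (adj F ^^ k) u v)"

lemma closer_neighbour:
  assumes "reach F u v" and "u \<noteq> v"
  shows "\<exists>j. adj F u j \<and> hop_dist F j v < hop_dist F u v"
proof -
  have path: "(adj F ^^ hop_dist F u v) u v"
    using assms(1) unfolding hop_dist_def reach_def rtranclp_power by (rule LeastI_ex)
  then obtain m where m: "hop_dist F u v = Suc m"
    using assms(2) by (cases "hop_dist F u v") auto
  then obtain j where j: "adj F u j" "(adj F ^^ m) j v"
    using path by (metis relpowp_Suc_D2)
  have "hop_dist F j v \<le> m"
    unfolding hop_dist_def using j(2) by (rule Least_le)
  then show ?thesis
    using j(1) m by auto
qed

section \<open>Spanning trees as parent maps\<close>

text \<open>A spanning tree rooted at \<open>r\<close> is encoded by the map sending each vertex of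
  \<open>S = V - {r}\<close> to its neighbour on the path towards \<open>r\<close>. Such a map is characterised
  by having no nonempty invariant subset of \<open>S\<close>, i.e. every orbit leaves \<open>S\<close>.\<close>

definition acyclic_on :: "'a set \<Rightarrow> ('a \<Rightarrow> 'a) \<Rightarrow> bool" where
  "acyclic_on S f \<longleftrightarrow> (\<forall>C. C \<subseteq> S \<and> C \<noteq> {} \<longrightarrow> \<not> f ` C \<subseteq> C)"

definition parent_edges :: "'a set \<Rightarrow> ('a \<Rightarrow> 'a) \<Rightarrow> 'a set set" where
  "parent_edges S f = (\<lambda>v. {v, f v}) ` S"

definition parent_maps :: "'a set \<Rightarrow> 'a set set \<Rightarrow> 'a \<Rightarrow> ('a \<Rightarrow> 'a) set" where
  "parent_maps V E r =
     {f \<in> V - {r} \<rightarrow>\<^sub>E V. acyclic_on (V - {r}) f \<and> (\<forall>v\<in>V - {r}. {v, f v} \<in> E)}"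

lemma acyclic_on_no_fixpoint: "acyclic_on S f \<Longrightarrow> v \<in> S \<Longrightarrow> f v \<noteq> v"
  unfolding acyclic_on_def by (erule allE[of _ "{v}"]) auto

lemma acyclic_on_no_2cycle: "acyclic_on S f \<Longrightarrow> u \<in> S \<Longrightarrow> v \<in> S \<Longrightarrow> f u = v \<Longrightarrow> f v \<noteq> u"
  unfolding acyclic_on_def by (erule allE[of _ "{u, v}"]) auto

lemma inj_on_parent_edge:
  assumes "acyclic_on S f"
  shows "inj_on (\<lambda>v. {v, f v}) S"
proof (rule inj_onI, rule ccontr)
  fix u v assume "u \<in> S" "v \<in> S" "{u, f u} = {v, f v}" "u \<noteq> v"
  then show False
    using acyclic_on_no_2cycle[OF assms] by (metis doubleton_eq_iff)
qed

text \<open>If \<open>x\<close> could reach \<open>f x\<close> avoiding the edge \<open>{x, f x}\<close>, the descendants of \<open>x\<close>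
  (the vertices whose orbit hits \<open>x\<close>) would contain \<open>f x\<close> and hence form an invariant set.\<close>

lemma parent_edge_no_detour:
  assumes acyclic: "acyclic_on S f" and x: "x \<in> S"
  shows "\<not> reach (parent_edges S f - {{x, f x}}) x (f x)"
proof
  assume detour: "reach (parent_edges S f - {{x, f x}}) x (f x)"
  define step where "step a b \<longleftrightarrow> a \<in> S \<and> b = f a" for a b
  define D where "D = {y. step\<^sup>*\<^sup>* y x}"
  have desc_cases: "y = x \<or> (y \<in> S \<and> f y \<in> D)" if "y \<in> D" for y
    using that unfolding D_def by (auto elim: converse_rtranclpE simp: step_def)
  have desc_step: "z \<in> D" if "z \<in> S" "f z \<in> D" for z
    using that unfolding D_def by (auto intro: converse_rtranclp_into_rtranclp simp: step_def)
  have "x \<in> D"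
    unfolding D_def by simp
  have "f x \<in> D"
  proof (rule reach_invariant[OF detour, of "\<lambda>y. y \<in> D"])
    fix a b assume a: "a \<in> D" "a \<noteq> b" "{a, b} \<in> parent_edges S f - {{x, f x}}"
    then obtain z where z: "z \<in> S" "{a, b} = {z, f z}"
      unfolding parent_edges_def by blast
    show "b \<in> D"
    proof (cases "a = z")
      case True
      then have "b = f a"
        using z(2) a(2) by (auto simp: doubleton_eq_iff)
      moreover have "a \<noteq> x"
        using True z(2) a(3) by auto
      ultimately show ?thesis
        using desc_cases[OF a(1)] by simp
    next
      case False
      then have "a = f z" "b = z"
        using z(2) by (auto simp: doubleton_eq_iff)
      then show ?thesis
        using desc_step z(1) a(1) by simp
    qed
  qed (fact \<open>x \<in> D\<close>)
  then have "f ` D \<subseteq> D"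
    using desc_cases by blast
  moreover have "D \<subseteq> S"
    using desc_cases x by blast
  ultimately show False
    using acyclic \<open>x \<in> D\<close> unfolding acyclic_on_def by blast
qed

lemma acyclic_graph_parent_edges:
  assumes "acyclic_on S f"
  shows "acyclic_graph (parent_edges S f)"
  unfolding acyclic_graph_def
proof (intro ballI allI impI)
  fix e u v assume "e \<in> parent_edges S f" and uv: "u \<noteq> v \<and> e = {u, v}"
  then obtain x where x: "x \<in> S" "e = {x, f x}"
    unfolding parent_edges_def by blast
  then have "u = x \<and> v = f x \<or> u = f x \<and> v = x"
    using uv by (simp add: doubleton_eq_iff)
  then show "\<not> reach (parent_edges S f - {e}) u v"
    using parent_edge_no_detour[OF assms x(1)] x(2) reach_sym[of "parent_edges S f - {e}" u v] by auto
qed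

lemma acyclic_on_decreasing:
  fixes d :: "'a \<Rightarrow> 'b :: linorder"
  assumes "finite S" and decreasing: "\<And>v. v \<in> S \<Longrightarrow> d (f v) < d v"
  shows "acyclic_on S f"
  unfolding acyclic_on_def
proof (intro allI impI notI)
  fix C assume C: "C \<subseteq> S \<and> C \<noteq> {}" and invariant: "f ` C \<subseteq> C"
  have "finite C"
    using C assms(1) finite_subset by blast
  then have "Min (d ` C) \<in> d ` C"
    using C by (intro Min_in) auto
  then obtain v where v: "v \<in> C" "d v = Min (d ` C)"
    by auto
  then have "d v \<le> d (f v)"
    using invariant \<open>finite C\<close> by (simp add: image_subset_iff)
  then show False
    using decreasing v(1) C by fastforce
qed

context
  fixes V :: "'a set" and E :: "'a set set" and r :: 'a
  assumes graph: "simple_graph V E" and root: "r \<in> V"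
begin

lemma finite_vertices: "finite V"
  using graph unfolding simple_graph_def by auto

lemma finite_edges: "finite E"
proof -
  have "E \<subseteq> Pow V"
    using graph unfolding simple_graph_def by auto
  then show ?thesis
    using finite_vertices by (meson finite_Pow_iff finite_subset)
qed

lemma edge_endpoint: "{u, v} \<in> E \<Longrightarrow> v \<in> V"
  using graph unfolding simple_graph_def by (metis doubleton_eq_iff insertI1 insert_commute)

text \<open>The vertices of \<open>S\<close> that cannot reach \<open>r\<close> form an invariant set, so there are none.\<close>

lemma parent_edges_connected:
  assumes f: "f \<in> parent_maps V E r"
  shows "connected_graph V (parent_edges (V - {r}) f)"
proof -
  let ?S = "V - {r}" and ?T = "parent_edges (V - {r}) f"
  have fS: "f \<in> ?S \<rightarrow>\<^sub>E V" and ac: "acyclic_on ?S f"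
    using f unfolding parent_maps_def by auto
  define P where "P = {v \<in> V. reach ?T v r}"
  have "r \<in> P"
    unfolding P_def using root reach_refl by simp
  have "f ` (?S - P) \<subseteq> ?S - P"
  proof
    fix y assume "y \<in> f ` (?S - P)"
    then obtain v where v: "v \<in> ?S" "v \<notin> P" "y = f v" by blast
    have "v \<noteq> f v"
      using acyclic_on_no_fixpoint[OF ac v(1)] by simp
    moreover have "{v, f v} \<in> ?T"
      using v(1) unfolding parent_edges_def by blast
    ultimately have edge: "reach ?T v (f v)"
      by (rule reach_edge)
    have "f v \<notin> P"
      using v(1,2) reach_trans[OF edge] unfolding P_def by blast
    then show "y \<in> ?S - P"
      using fS v \<open>r \<in> P\<close> by auto
  qed
  then have "?S - P = {}"
    using ac unfolding acyclic_on_def by (meson Diff_subset)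
  then have to_root: "reach ?T v r" if "v \<in> V" for v
    using that reach_refl unfolding P_def by (cases "v = r") auto
  show ?thesis
    unfolding connected_graph_def
    by (intro ballI) (rule reach_trans[OF to_root reach_sym[OF to_root]])
qed

lemma parent_edges_spanning_tree:
  assumes f: "f \<in> parent_maps V E r"
  shows "parent_edges (V - {r}) f \<in> spanning_trees V E"
proof -
  have "parent_edges (V - {r}) f \<subseteq> E"
    using f unfolding parent_maps_def parent_edges_def by blast
  then show ?thesis
    unfolding spanning_trees_def
    using parent_edges_connected[OF f] acyclic_graph_parent_edges f
    unfolding parent_maps_def by auto
qed

lemma parent_map_within:
  assumes TE: "T \<subseteq> E" and conT: "connected_graph V T"
  obtains f where "f \<in> parent_maps V E r" and "parent_edges (V - {r}) f \<subseteq> T"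
proof -
  let ?S = "V - {r}"
  have closer: "\<exists>j. adj T v j \<and> hop_dist T j r < hop_dist T v r" if "v \<in> ?S" for v
    using that conT root unfolding connected_graph_def by (intro closer_neighbour) auto
  define f where "f = restrict (\<lambda>v. SOME j. adj T v j \<and> hop_dist T j r < hop_dist T v r) ?S"
  have fP: "adj T v (f v) \<and> hop_dist T (f v) r < hop_dist T v r" if "v \<in> ?S" for v
    unfolding f_def using someI_ex[OF closer[OF that]] that by simp
  have fT: "{v, f v} \<in> T" if "v \<in> ?S" for v
    using fP[OF that] unfolding adj_def by blast
  have "f \<in> ?S \<rightarrow>\<^sub>E V"
    unfolding f_def using fT TE edge_endpoint by (auto simp: f_def)
  moreover have "acyclic_on ?S f"
    using finite_vertices fP by (intro acyclic_on_decreasing[of _ "\<lambda>v. hop_dist T v r"]) auto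
  ultimately have "f \<in> parent_maps V E r"
    unfolding parent_maps_def using fT TE by blast
  moreover have "parent_edges ?S f \<subseteq> T"
    unfolding parent_edges_def using fT by blast
  ultimately show ?thesis
    using that by blast
qed

lemma spanning_tree_parent_edges:
  assumes T: "T \<in> spanning_trees V E"
  obtains f where "f \<in> parent_maps V E r" and "parent_edges (V - {r}) f = T"
proof -
  have TE: "T \<subseteq> E" and conT: "connected_graph V T" and acT: "acyclic_graph T"
    using T unfolding spanning_trees_def by auto
  obtain f where f: "f \<in> parent_maps V E r" and sub: "parent_edges (V - {r}) f \<subseteq> T"
    using parent_map_within[OF TE conT] .
  have "e \<in> parent_edges (V - {r}) f" if e: "e \<in> T" for e
  proof (rule ccontr)
    assume missing: "e \<notin> parent_edges (V - {r}) f"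
    obtain u v where uv: "u \<in> V" "v \<in> V" "u \<noteq> v" "e = {u, v}"
      using e TE graph unfolding simple_graph_def by blast
    have "reach (parent_edges (V - {r}) f) u v"
      using parent_edges_connected[OF f] uv unfolding connected_graph_def by blast
    then have "reach (T - {e}) u v"
      by (rule reach_mono[rotated]) (use sub missing in blast)
    then show False
      using acT e uv unfolding acyclic_graph_def by blast
  qed
  then show ?thesis
    using that f sub by blast
qed

text \<open>Two parent maps with the same edges agree: where they differ, \<open>g v\<close> is again such a
  point (otherwise \<open>v\<close> and \<open>g v\<close> would form a 2-cycle of \<open>g\<close>).\<close>

lemma parent_edges_inj:
  assumes f: "f \<in> parent_maps V E r" and g: "g \<in> parent_maps V E r"
    and eq: "parent_edges (V - {r}) f = parent_edges (V - {r}) g"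
  shows "f = g"
proof -
  let ?S = "V - {r}"
  have fS: "f \<in> ?S \<rightarrow>\<^sub>E V" and gS: "g \<in> ?S \<rightarrow>\<^sub>E V" and acg: "acyclic_on ?S g"
    using f g unfolding parent_maps_def by auto
  define W where "W = {v \<in> ?S. f v \<noteq> g v}"
  have "g ` W \<subseteq> W"
  proof
    fix y assume "y \<in> g ` W"
    then obtain v where v: "v \<in> ?S" "f v \<noteq> g v" "y = g v"
      unfolding W_def by blast
    have "{v, g v} \<in> parent_edges ?S f"
      using eq v(1) unfolding parent_edges_def by blast
    then obtain z where z: "z \<in> ?S" "{v, g v} = {z, f z}"
      unfolding parent_edges_def by blast
    have "z \<noteq> v"
    proof
      assume "z = v"
      then have "g v = f v"
        using z(2) by (metis doubleton_eq_iff)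
      then show False
        using v(2) by simp
    qed
    then have "v = f z \<and> g v = z"
      using z(2)[unfolded doubleton_eq_iff] by blast
    then have gv: "g v \<in> ?S" "f (g v) = v"
      using z(1) by metis+
    have "g (g v) \<noteq> v"
      using acyclic_on_no_2cycle[OF acg v(1) gv(1) refl] .
    then show "y \<in> W"
      unfolding W_def using v(3) gv by simp
  qed
  moreover have "W \<subseteq> ?S"
    unfolding W_def by blast
  ultimately have "W = {}"
    using acg unfolding acyclic_on_def by blast
  show ?thesis
  proof (rule PiE_ext[OF fS gS])
    fix v assume "v \<in> ?S"
    then show "f v = g v"
      using \<open>W = {}\<close> unfolding W_def by auto
  qed
qed

lemma bij_betw_parent_edges: "bij_betw (parent_edges (V - {r})) (parent_maps V E r) (spanning_trees V E)"
  unfolding bij_betw_def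
proof
  show "inj_on (parent_edges (V - {r})) (parent_maps V E r)"
    by (rule inj_onI) (rule parent_edges_inj)
  show "parent_edges (V - {r}) ` parent_maps V E r = spanning_trees V E"
  proof
    show "parent_edges (V - {r}) ` parent_maps V E r \<subseteq> spanning_trees V E"
      using parent_edges_spanning_tree by blast
    show "spanning_trees V E \<subseteq> parent_edges (V - {r}) ` parent_maps V E r"
    proof
      fix T assume "T \<in> spanning_trees V E"
      then obtain f where "f \<in> parent_maps V E r" "parent_edges (V - {r}) f = T"
        by (rule spanning_tree_parent_edges)
      then show "T \<in> parent_edges (V - {r}) ` parent_maps V E r"
        by blast
    qed
  qed
qed

lemma finite_spanning_trees: "finite (spanning_trees V E)"
proof -
  have "parent_maps V E r \<subseteq> V - {r} \<rightarrow>\<^sub>E V"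
    unfolding parent_maps_def by blast
  then have "finite (parent_maps V E r)"
    using finite_vertices by (meson finite_PiE finite_Diff finite_subset)
  then show ?thesis
    using bij_betw_parent_edges bij_betw_finite by blast
qed

lemma spanning_trees_nonempty:
  assumes "connected_graph V E"
  shows "spanning_trees V E \<noteq> {}"
  using parent_map_within[OF subset_refl assms] parent_edges_spanning_tree by blast

end

definition to_mat :: "nat \<Rightarrow> (nat \<Rightarrow> 'a) \<Rightarrow> ('a \<Rightarrow> 'a \<Rightarrow> 'b) \<Rightarrow> 'b mat" where
  "to_mat n h M = mat n n (\<lambda>(i, j). M (h i) (h j))"

lemma to_mat_carrier [simp]: "to_mat n h M \<in> carrier_mat n n"
  and dim_to_mat [simp]: "dim_row (to_mat n h M) = n" "dim_col (to_mat n h M) = n"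
  and index_to_mat [simp]: "i < n \<Longrightarrow> j < n \<Longrightarrow> to_mat n h M $$ (i, j) = M (h i) (h j)"
  unfolding to_mat_def by simp_all

definition mat_trace :: "'a :: comm_ring_1 mat \<Rightarrow> 'a" where
  "mat_trace A = (\<Sum>i = 0..<dim_row A. A $$ (i, i))"

lemma mtrace_mmult_diff:
  "mtrace S (mmult S (\<lambda>i j. A i j - B i j) C) = mtrace S (mmult S A C) - mtrace S (mmult S B C)"
  unfolding mtrace_def mmult_def by (simp add: left_diff_distrib sum_subtractf)

lemma mtrace_mmult_half: "mtrace S (mmult S (\<lambda>i j. A i j / 2) B) = mtrace S (mmult S A B) / 2"
  unfolding mtrace_def mmult_def by (simp add: sum_divide_distrib)

locale enumeration =
  fixes S :: "'a set" and n :: nat and h :: "nat \<Rightarrow> 'a"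
  assumes bij: "bij_betw h {0..<n} S"
begin

lemma enum_in: "i < n \<Longrightarrow> h i \<in> S"
  using bij unfolding bij_betw_def by auto

lemma enum_eq_iff: "i < n \<Longrightarrow> j < n \<Longrightarrow> h i = h j \<longleftrightarrow> i = j"
  using bij unfolding bij_betw_def inj_on_def by auto

lemma finite_enumerated: "finite S"
  using bij_betw_finite[OF bij] by simp

definition index :: "'a \<Rightarrow> nat" where
  "index = the_inv_into {0..<n} h"

lemma index_less: "u \<in> S \<Longrightarrow> index u < n"
  using bij_betw_the_inv_into[OF bij] unfolding index_def bij_betw_def by auto

lemma enum_index: "u \<in> S \<Longrightarrow> h (index u) = u"
  unfolding index_def using f_the_inv_into_f_bij_betw[OF bij] by blast

lemma index_enum: "i < n \<Longrightarrow> index (h i) = i"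
  unfolding index_def using bij the_inv_into_f_f unfolding bij_betw_def by fastforce

lemma sum_enum: "(\<Sum>i = 0..<n. g (h i)) = (\<Sum>u\<in>S. g u)"
  by (rule sum.reindex_bij_betw[OF bij])

lemma prod_enum: "(\<Prod>i = 0..<n. g (h i)) = (\<Prod>u\<in>S. g u)"
  by (rule prod.reindex_bij_betw[OF bij])

lemma to_mat_mmult: "to_mat n h (mmult S A B) = to_mat n h A * to_mat n h B"
proof (rule eq_matI)
  fix i j assume "i < dim_row (to_mat n h A * to_mat n h B)" "j < dim_col (to_mat n h A * to_mat n h B)"
  then have ij: "i < n" "j < n"
    by simp_all
  then have "to_mat n h (mmult S A B) $$ (i, j) = (\<Sum>k = 0..<n. A (h i) (h k) * B (h k) (h j))"
    unfolding mmult_def using sum_enum[of "\<lambda>k. A (h i) k * B k (h j)"] by simp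
  also have "\<dots> = (to_mat n h A * to_mat n h B) $$ (i, j)"
    using ij by (simp add: scalar_prod_def)
  finally show "to_mat n h (mmult S A B) $$ (i, j) = (to_mat n h A * to_mat n h B) $$ (i, j)" .
qed simp_all

lemma mtrace_eq_mat_trace: "mtrace S M = mat_trace (to_mat n h M)"
  unfolding mtrace_def mat_trace_def using sum_enum[of "\<lambda>u. M u u"] by simp

lemma to_mat_eq_iff: "to_mat n h M = to_mat n h M' \<longleftrightarrow> (\<forall>u\<in>S. \<forall>v\<in>S. M u v = M' u v)"
proof
  assume eq: "to_mat n h M = to_mat n h M'"
  show "\<forall>u\<in>S. \<forall>v\<in>S. M u v = M' u v"
  proof (intro ballI)
    fix u v assume "u \<in> S" "v \<in> S"
    then show "M u v = M' u v"
      using arg_cong[OF eq, of "\<lambda>X. X $$ (index u, index v)"] index_less enum_index by simp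
  qed
qed (auto intro!: eq_matI simp: enum_in)

lemma to_mat_identity: "to_mat n h (\<lambda>u v. if u = v then 1 else 0) = 1\<^sub>m n"
  by (rule eq_matI) (auto simp: enum_eq_iff)

lemma is_inverse_on_iff_to_mat:
  "is_inverse_on S A B \<longleftrightarrow> to_mat n h A * to_mat n h B = 1\<^sub>m n \<and> to_mat n h B * to_mat n h A = 1\<^sub>m n"
  unfolding is_inverse_on_def to_mat_mmult[symmetric] to_mat_identity[symmetric] to_mat_eq_iff
  by blast

lemma to_mat_minv:
  assumes "det (to_mat n h A) \<noteq> 0"
  shows "to_mat n h (minv S A) * to_mat n h A = 1\<^sub>m n"
proof -
  let ?X = "to_mat n h A"
  obtain Y where Y: "Y \<in> carrier_mat n n" "Y * ?X = 1\<^sub>m n" "?X * Y = 1\<^sub>m n"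
    using det_non_zero_imp_unit[OF to_mat_carrier assms, of "()"]
    unfolding Units_def ring_mat_def by auto
  define B where "B u v = (if u \<in> S \<and> v \<in> S then Y $$ (index u, index v) else 0)" for u v
  have "to_mat n h B = Y"
    using Y(1) by (intro eq_matI) (auto simp: B_def enum_in index_enum)
  have unique: "B' = B" if "is_inverse_on S A B'" and "\<forall>u v. u \<notin> S \<or> v \<notin> S \<longrightarrow> B' u v = 0" for B'
  proof -
    have "to_mat n h B' = (Y * ?X) * to_mat n h B'"
      by (simp add: Y(2))
    also have "\<dots> = Y * (?X * to_mat n h B')"
      by (rule assoc_mult_mat[OF Y(1) to_mat_carrier to_mat_carrier])
    also have "\<dots> = Y"
      using that(1) Y(1) unfolding is_inverse_on_iff_to_mat by simp
    finally have "\<forall>u\<in>S. \<forall>v\<in>S. B' u v = B u v"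
      using \<open>to_mat n h B = Y\<close> to_mat_eq_iff by metis
    then show ?thesis
      using that(2) unfolding B_def by (auto intro!: ext)
  qed
  have "minv S A = B"
    unfolding minv_def
  proof (rule the_equality)
    show "is_inverse_on S A B \<and> (\<forall>u v. u \<notin> S \<or> v \<notin> S \<longrightarrow> B u v = 0)"
      using Y \<open>to_mat n h B = Y\<close> unfolding is_inverse_on_iff_to_mat B_def by auto
  qed (use unique in blast)
  then show ?thesis
    using Y(2) \<open>to_mat n h B = Y\<close> by simp
qed

end

definition moved :: "('a \<Rightarrow> 'a) \<Rightarrow> 'a set" where
  "moved p = {x. p x \<noteq> x}"

lemma moved_subset: "p permutes A \<Longrightarrow> moved p \<subseteq> A"
  unfolding moved_def using permutes_not_in by fastforce

lemma moved_closed: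
  assumes "p permutes A" and "x \<in> moved p"
  shows "p x \<in> moved p"
proof -
  have "p (p x) \<noteq> p x"
    using assms(2) injD[OF permutes_inj[OF assms(1)], of "p x" x] unfolding moved_def by blast
  then show ?thesis
    unfolding moved_def by simp
qed

lemma moved_empty_iff: "moved p = {} \<longleftrightarrow> p = id"
  unfolding moved_def by auto

lemma card_moved_neq_1:
  assumes "p permutes A"
  shows "card (moved p) \<noteq> 1"
proof
  assume "card (moved p) = 1"
  then obtain a where a: "moved p = {a}"
    by (auto simp: card_Suc_eq)
  then have "p a = a"
    using moved_closed[OF assms, of a] by auto
  then show False
    using a unfolding moved_def by auto
qed

lemma moved_transpose: "a \<noteq> b \<Longrightarrow> moved (Transposition.transpose a b) = {a, b}"
  unfolding moved_def by (auto simp: transpose_def)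

lemma card_moved_eq_2:
  assumes p: "p permutes A" and two: "card (moved p) = 2"
  obtains a b where "a \<noteq> b" and "moved p = {a, b}" and "p = Transposition.transpose a b"
proof -
  obtain a b where ab: "a \<noteq> b" "moved p = {a, b}"
    using two by (auto simp: card_Suc_eq numeral_2_eq_2)
  have "p a \<in> {a, b}" "p b \<in> {a, b}" "p a \<noteq> a" "p b \<noteq> b"
    using moved_closed[OF p] ab unfolding moved_def by blast+
  then have "p a = b" "p b = a"
    by auto
  moreover have "p x = x" if "x \<notin> {a, b}" for x
    using that ab(2) unfolding moved_def by blast
  ultimately have "p = Transposition.transpose a b"
    by (auto simp: transpose_def)
  then show ?thesis
    using that ab by blast
qed

lemma two_le_card_moved:
  assumes "p permutes A" and "finite A" and "p \<noteq> id"
  shows "2 \<le> card (moved p)"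
proof -
  have "finite (moved p)" and "moved p \<noteq> {}"
    using moved_subset[OF assms(1)] moved_empty_iff[of p] assms(2,3) finite_subset by auto
  then have "card (moved p) \<noteq> 0"
    by simp
  then show ?thesis
    using card_moved_neq_1[OF assms(1)] by linarith
qed

lemma bij_betw_transpositions:
  "bij_betw (\<lambda>(a, b). Transposition.transpose a b) (Sigma {0..<n} (\<lambda>a. {Suc a..<n}))
    {p. p permutes {0..<n} \<and> card (moved p) = 2}"
proof (rule bij_betw_imageI)
  let ?D = "Sigma {0..<n} (\<lambda>a. {Suc a..<n})"
  show "inj_on (\<lambda>(a, b). Transposition.transpose a b) ?D"
  proof (rule inj_onI)
    fix x y assume "x \<in> ?D" "y \<in> ?D"
      and eq: "(\<lambda>(a, b). Transposition.transpose a b) x = (\<lambda>(a, b). Transposition.transpose a b) y"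
    moreover obtain a b where x: "x = (a, b)"
      by (cases x)
    moreover obtain a' b' where y: "y = (a', b')"
      by (cases y)
    ultimately have "a < b" "a' < b'" "Transposition.transpose a b = Transposition.transpose a' b'"
      by auto
    then have "{a, b} = {a', b'}"
      using moved_transpose[of a b] moved_transpose[of a' b'] by auto
    then show "x = y"
      using x y \<open>a < b\<close> \<open>a' < b'\<close> by (auto simp: doubleton_eq_iff)
  qed
  show "(\<lambda>(a, b). Transposition.transpose a b) ` ?D = {p. p permutes {0..<n} \<and> card (moved p) = 2}"
  proof
    show "(\<lambda>(a, b). Transposition.transpose a b) ` ?D \<subseteq> {p. p permutes {0..<n} \<and> card (moved p) = 2}"
      by (auto simp: moved_transpose permutes_swap_id)
    show "{p. p permutes {0..<n} \<and> card (moved p) = 2} \<subseteq> (\<lambda>(a, b). Transposition.transpose a b) ` ?D"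
    proof
      fix p assume p: "p \<in> {p. p permutes {0..<n} \<and> card (moved p) = 2}"
      then obtain a b where ab: "a \<noteq> b" "moved p = {a, b}" "p = Transposition.transpose a b"
        using card_moved_eq_2 by blast
      have "{a, b} \<subseteq> {0..<n}"
        using moved_subset[of p "{0..<n}"] p ab(2) by auto
      then have "(min a b, max a b) \<in> ?D"
        using ab(1) by auto
      moreover have "p = (\<lambda>(a, b). Transposition.transpose a b) (min a b, max a b)"
        using ab(3) by (cases "a < b") (auto simp: transpose_commute)
      ultimately show "p \<in> (\<lambda>(a, b). Transposition.transpose a b) ` ?D"
        by (intro image_eqI)
    qed
  qed
qed

section \<open>The determinant of \<open>I - A\<^sub>f\<close> for a map \<open>f\<close>\<close>

definition map_laplacian :: "('a \<Rightarrow> 'a) \<Rightarrow> 'a \<Rightarrow> 'a \<Rightarrow> real" where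
  "map_laplacian f u v = (if u = v then 1 else 0) - (if f u = v then 1 else 0)"

context enumeration
begin

text \<open>A non-identity permutation with a nonzero term sends every moved index \<open>i\<close> to the index
  of \<open>f (h i)\<close>, so the moved vertices would form an invariant set.\<close>

lemma det_map_laplacian_acyclic:
  assumes acyclic: "acyclic_on S f"
  shows "det (to_mat n h (map_laplacian f)) = 1"
proof -
  let ?M = "to_mat n h (map_laplacian f)"
  have off_diagonal: "(\<Prod>i = 0..<n. ?M $$ (i, p i)) = 0"
    if p: "p permutes {0..<n}" "p \<noteq> id" for p
  proof (rule ccontr)
    assume "(\<Prod>i = 0..<n. ?M $$ (i, p i)) \<noteq> 0"
    then have entry: "?M $$ (i, p i) \<noteq> 0" if "i < n" for i
      using that by auto
    have moved_less: "i < n" if "i \<in> moved p" for i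
      using that moved_subset[OF p(1)] by auto
    have "f (h i) = h (p i)" if "i \<in> moved p" for i
      using entry[OF moved_less[OF that]] that permutes_in_image[OF p(1)] moved_less[OF that]
        enum_eq_iff[of i "p i"]
      unfolding moved_def map_laplacian_def by (auto split: if_splits)
    then have "f ` h ` moved p \<subseteq> h ` moved p"
      using moved_closed[OF p(1)] by blast
    moreover have "h ` moved p \<subseteq> S" and "h ` moved p \<noteq> {}"
      using moved_less enum_in p(2) moved_empty_iff[of p] by auto
    ultimately show False
      using acyclic unfolding acyclic_on_def by blast
  qed
  have "det ?M = (\<Sum>p\<in>{p. p permutes {0..<n}}. signof p * (\<Prod>i = 0..<n. ?M $$ (i, p i)))"
    by (rule det_def') simp
  also have "\<dots> = (\<Sum>p\<in>{id}. signof p * (\<Prod>i = 0..<n. ?M $$ (i, p i)))"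
    by (rule sum.mono_neutral_right) (use off_diagonal permutes_id finite_permutations in auto)
  also have "\<dots> = 1"
    using acyclic_on_no_fixpoint[OF acyclic enum_in] by (simp add: map_laplacian_def)
  finally show ?thesis .
qed

lemma map_laplacian_indicator_kernel:
  assumes "U \<subseteq> S" and "f ` U \<subseteq> U" and "\<And>v. v \<in> S \<Longrightarrow> f v \<in> U \<Longrightarrow> v \<in> U"
  shows "to_mat n h (map_laplacian f) *\<^sub>v vec n (\<lambda>j. if h j \<in> U then 1 else 0) = 0\<^sub>v n"
proof (rule eq_vecI)
  fix i assume "i < dim_vec (0\<^sub>v n :: real vec)"
  then have i: "i < n"
    by simp
  have "(to_mat n h (map_laplacian f) *\<^sub>v vec n (\<lambda>j. if h j \<in> U then 1 else 0)) $ i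
      = (\<Sum>k = 0..<n. map_laplacian f (h i) (h k) * (if h k \<in> U then 1 else 0))"
    using i by (simp add: scalar_prod_def)
  also have "\<dots> = (\<Sum>u\<in>S. map_laplacian f (h i) u * (if u \<in> U then 1 else 0))"
    by (rule sum_enum)
  also have "\<dots> = (if h i \<in> U then 1 else 0) - (if f (h i) \<in> U then 1 else 0)"
    using enum_in[OF i] finite_enumerated assms(1)
    by (auto simp: map_laplacian_def left_diff_distrib sum_subtractf if_distrib[of "\<lambda>c. c * _"]
        sum.If_cases Int_absorb1 cong: if_cong)
  also have "\<dots> = 0"
    using assms(2) assms(3)[OF enum_in[OF i]] by auto
  finally show "(to_mat n h (map_laplacian f) *\<^sub>v vec n (\<lambda>j. if h j \<in> U then 1 else 0)) $ i = 0\<^sub>v n $ i"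
    using i by simp
qed simp

text \<open>If \<open>f\<close> has an invariant subset of \<open>S\<close>, the indicator of the largest one is in the kernel.\<close>

lemma det_map_laplacian_cyclic:
  assumes cyclic: "\<not> acyclic_on S f"
  shows "det (to_mat n h (map_laplacian f)) = 0"
proof -
  define U where "U = \<Union>{C. C \<subseteq> S \<and> f ` C \<subseteq> C}"
  have U_S: "U \<subseteq> S" and U_invariant: "f ` U \<subseteq> U"
    unfolding U_def by blast+
  have U_preimage: "v \<in> U" if "v \<in> S" "f v \<in> U" for v
  proof -
    have "insert v U \<subseteq> S" and "f ` insert v U \<subseteq> insert v U"
      using U_S U_invariant that by blast+
    then show ?thesis
      unfolding U_def by blast
  qed
  define x where "x = vec n (\<lambda>j. if h j \<in> U then 1 else (0::real))"
  obtain u where "u \<in> U"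
    using cyclic unfolding acyclic_on_def U_def by blast
  then have "x $ index u = 1" and "index u < n"
    using U_S index_less enum_index unfolding x_def by auto
  then have "x \<noteq> 0\<^sub>v n"
    by auto
  moreover have "to_mat n h (map_laplacian f) *\<^sub>v x = 0\<^sub>v n"
    unfolding x_def using U_S U_invariant U_preimage by (rule map_laplacian_indicator_kernel)
  moreover have "x \<in> carrier_vec n"
    unfolding x_def by simp
  ultimately show ?thesis
    using det_0_iff_vec_prod_zero[OF to_mat_carrier] by blast
qed

end

section \<open>The weighted matrix-tree theorem\<close>

lemma laplacian_add: "laplacian V E (\<lambda>e. c e + d e) u v = laplacian V E c u v + laplacian V E d u v"
proof -
  have "Defs.adj_mat E (\<lambda>e. c e + d e) y x = Defs.adj_mat E c y x + Defs.adj_mat E d y x" for y x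
    unfolding Defs.adj_mat_def by simp
  then show ?thesis
    unfolding laplacian_def by (simp add: sum.distrib)
qed

lemma laplacian_scale: "laplacian V E (\<lambda>e. k * c e) u v = k * laplacian V E c u v"
proof -
  have "Defs.adj_mat E (\<lambda>e. k * c e) y x = k * Defs.adj_mat E c y x" for y x
    unfolding Defs.adj_mat_def by simp
  then show ?thesis
    unfolding laplacian_def by (simp add: sum_distrib_left right_diff_distrib)
qed

locale rooted_enumeration = enumeration "V - {r}" n h
  for V :: "'a set" and E :: "'a set set" and r :: 'a and n :: nat and h :: "nat \<Rightarrow> 'a" +
  assumes graph: "simple_graph V E" and root: "r \<in> V"
begin

lemma reduced_laplacian_row_expansion:
  assumes "u \<in> V - {r}" and "v \<in> V - {r}"
  shows "reduced r (laplacian V E c) u v = (\<Sum>k\<in>V. Defs.adj_mat E c u k * map_laplacian (\<lambda>_. k) u v)"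
proof -
  have "(\<Sum>k\<in>V. Defs.adj_mat E c u k * map_laplacian (\<lambda>_. k) u v)
      = (\<Sum>k\<in>V. (if u = v then Defs.adj_mat E c u k else 0)) - (\<Sum>k\<in>V. if v = k then Defs.adj_mat E c u k else 0)"
    unfolding map_laplacian_def sum_subtractf[symmetric] by (rule sum.cong) auto
  also have "\<dots> = laplacian V E c u v"
    using assms finite_vertices[OF graph root] unfolding laplacian_def by auto
  finally show ?thesis
    using assms unfolding reduced_def by simp
qed

lemma reduced_laplacian_diagonal_product:
  assumes p: "p permutes {0..<n}"
  shows "(\<Prod>i = 0..<n. to_mat n h (reduced r (laplacian V E c)) $$ (i, p i))
    = (\<Sum>f\<in>V - {r} \<rightarrow>\<^sub>E V. (\<Prod>u\<in>V - {r}. Defs.adj_mat E c u (f u))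
          * (\<Prod>i = 0..<n. to_mat n h (map_laplacian f) $$ (i, p i)))"
proof -
  let ?S = "V - {r}"
  have p_less: "p i < n" if "i < n" for i
    using permutes_in_image[OF p] that by simp
  define G where "G u k = Defs.adj_mat E c u k * map_laplacian (\<lambda>_. k) u (h (p (index u)))" for u k
  have "(\<Prod>i = 0..<n. to_mat n h (reduced r (laplacian V E c)) $$ (i, p i))
      = (\<Prod>i = 0..<n. \<Sum>k\<in>V. G (h i) k)"
    using p_less enum_in by (intro prod.cong) (auto simp: G_def index_enum reduced_laplacian_row_expansion)
  also have "\<dots> = (\<Prod>u\<in>?S. \<Sum>k\<in>V. G u k)"
    by (rule prod_enum)
  also have "\<dots> = (\<Sum>f\<in>?S \<rightarrow>\<^sub>E V. \<Prod>u\<in>?S. G u (f u))"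
    using finite_vertices[OF graph root] by (intro prod_sum_PiE) auto
  also have "\<dots> = (\<Sum>f\<in>?S \<rightarrow>\<^sub>E V. (\<Prod>u\<in>?S. Defs.adj_mat E c u (f u))
          * (\<Prod>u\<in>?S. map_laplacian f u (h (p (index u)))))"
    unfolding G_def prod.distrib by (simp add: map_laplacian_def)
  also have "\<dots> = (\<Sum>f\<in>?S \<rightarrow>\<^sub>E V. (\<Prod>u\<in>?S. Defs.adj_mat E c u (f u))
          * (\<Prod>i = 0..<n. to_mat n h (map_laplacian f) $$ (i, p i)))"
    using p_less by (simp add: prod_enum[symmetric] index_enum)
  finally show ?thesis .
qed

lemma det_reduced_laplacian_sum_maps:
  "det (to_mat n h (reduced r (laplacian V E c)))
    = (\<Sum>f\<in>V - {r} \<rightarrow>\<^sub>E V. (\<Prod>u\<in>V - {r}. Defs.adj_mat E c u (f u)) * det (to_mat n h (map_laplacian f)))"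
proof -
  let ?S = "V - {r}" and ?L = "to_mat n h (reduced r (laplacian V E c))"
  let ?A = "\<lambda>f. \<Prod>u\<in>?S. Defs.adj_mat E c u (f u)"
  let ?P = "{p. p permutes {0..<n}}"
  have "det ?L = (\<Sum>p\<in>?P. signof p * (\<Prod>i = 0..<n. ?L $$ (i, p i)))"
    by (rule det_def') simp
  also have "\<dots> = (\<Sum>p\<in>?P. \<Sum>f\<in>?S \<rightarrow>\<^sub>E V.
      ?A f * (signof p * (\<Prod>i = 0..<n. to_mat n h (map_laplacian f) $$ (i, p i))))"
  proof (rule sum.cong[OF refl])
    fix p assume "p \<in> ?P"
    then have p: "p permutes {0..<n}"
      by simp
    show "signof p * (\<Prod>i = 0..<n. ?L $$ (i, p i)) = (\<Sum>f\<in>?S \<rightarrow>\<^sub>E V.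
      ?A f * (signof p * (\<Prod>i = 0..<n. to_mat n h (map_laplacian f) $$ (i, p i))))"
      unfolding reduced_laplacian_diagonal_product[OF p] sum_distrib_left
      by (simp add: mult.left_commute)
  qed
  also have "\<dots> = (\<Sum>f\<in>?S \<rightarrow>\<^sub>E V. ?A f * det (to_mat n h (map_laplacian f)))"
    by (subst sum.swap) (simp add: det_def'[OF to_mat_carrier] sum_distrib_left)
  finally show ?thesis .
qed

lemma sum_maps_det_map_laplacian:
  "(\<Sum>f\<in>V - {r} \<rightarrow>\<^sub>E V. (\<Prod>u\<in>V - {r}. Defs.adj_mat E c u (f u)) * det (to_mat n h (map_laplacian f)))
    = (\<Sum>f\<in>parent_maps V E r. \<Prod>u\<in>V - {r}. c {u, f u})"
proof (rule sum.mono_neutral_cong_right)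
  let ?S = "V - {r}"
  let ?A = "\<lambda>f. \<Prod>u\<in>?S. Defs.adj_mat E c u (f u)"
  show "finite (?S \<rightarrow>\<^sub>E V)"
    using finite_vertices[OF graph root] by (simp add: finite_PiE)
  show "parent_maps V E r \<subseteq> ?S \<rightarrow>\<^sub>E V"
    unfolding parent_maps_def by blast
  show "\<forall>f\<in>(?S \<rightarrow>\<^sub>E V) - parent_maps V E r. ?A f * det (to_mat n h (map_laplacian f)) = 0"
  proof
    fix f assume f: "f \<in> (?S \<rightarrow>\<^sub>E V) - parent_maps V E r"
    show "?A f * det (to_mat n h (map_laplacian f)) = 0"
    proof (cases "acyclic_on ?S f")
      case True
      then obtain u where "u \<in> ?S" "{u, f u} \<notin> E"
        using f unfolding parent_maps_def by blast
      then have "?A f = 0"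
        using finite_enumerated by (auto simp: Defs.adj_mat_def)
      then show ?thesis
        by simp
    next
      case False
      then show ?thesis
        by (simp add: det_map_laplacian_cyclic)
    qed
  qed
next
  fix f assume "f \<in> parent_maps V E r"
  then have acyclic: "acyclic_on (V - {r}) f" and edges: "\<forall>u\<in>V - {r}. {u, f u} \<in> E"
    unfolding parent_maps_def by blast+
  have "(\<Prod>u\<in>V - {r}. Defs.adj_mat E c u (f u)) = (\<Prod>u\<in>V - {r}. c {u, f u})"
    using edges by (intro prod.cong) (auto simp: Defs.adj_mat_def)
  then show "(\<Prod>u\<in>V - {r}. Defs.adj_mat E c u (f u)) * det (to_mat n h (map_laplacian f))
      = (\<Prod>u\<in>V - {r}. c {u, f u})"
    by (simp add: det_map_laplacian_acyclic[OF acyclic])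
qed

theorem matrix_tree:
  "det (to_mat n h (reduced r (laplacian V E c))) = (\<Sum>T\<in>spanning_trees V E. \<Prod>e\<in>T. c e)"
proof -
  have "det (to_mat n h (reduced r (laplacian V E c))) = (\<Sum>f\<in>parent_maps V E r. \<Prod>u\<in>V - {r}. c {u, f u})"
    unfolding det_reduced_laplacian_sum_maps sum_maps_det_map_laplacian ..
  also have "\<dots> = (\<Sum>f\<in>parent_maps V E r. \<Prod>e\<in>parent_edges (V - {r}) f. c e)"
  proof (rule sum.cong[OF refl])
    fix f assume "f \<in> parent_maps V E r"
    then have "acyclic_on (V - {r}) f"
      unfolding parent_maps_def by blast
    then show "(\<Prod>u\<in>V - {r}. c {u, f u}) = (\<Prod>e\<in>parent_edges (V - {r}) f. c e)"
      unfolding parent_edges_def by (simp add: prod.reindex[OF inj_on_parent_edge])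
  qed
  also have "\<dots> = (\<Sum>T\<in>spanning_trees V E. \<Prod>e\<in>T. c e)"
    by (rule sum.reindex_bij_betw[OF bij_betw_parent_edges[OF graph root]])
  finally show ?thesis .
qed

lemma det_laplacian_pencil:
  "det (to_mat n h (\<lambda>u v. [:reduced r (laplacian V E a) u v, reduced r (laplacian V E b) u v,
      reduced r (laplacian V E c) u v:]))
    = (\<Sum>T\<in>spanning_trees V E. \<Prod>e\<in>T. [:a e, b e, c e:])"
    (is "det ?M = ?p")
proof -
  have "poly (det ?M) s = poly ?p s" for s
  proof -
    interpret evaluation: comm_ring_hom "\<lambda>p :: real poly. poly p s"
      by unfold_locales simp_all
    have "poly (det ?M) s = det (map_mat (\<lambda>p. poly p s) ?M)"
      by (rule evaluation.hom_det[symmetric])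
    also have "map_mat (\<lambda>p. poly p s) ?M
      = to_mat n h (reduced r (laplacian V E (\<lambda>e. a e + s * b e + s\<^sup>2 * c e)))"
      by (rule eq_matI) (simp_all add: reduced_def laplacian_add laplacian_scale algebra_simps power2_eq_square)
    also have "det \<dots> = (\<Sum>T\<in>spanning_trees V E. \<Prod>e\<in>T. a e + s * b e + s\<^sup>2 * c e)"
      by (rule matrix_tree)
    also have "\<dots> = poly ?p s"
      by (simp add: poly_sum poly_prod algebra_simps power2_eq_square)
    finally show ?thesis .
  qed
  then show ?thesis
    using poly_eq_poly_eq_iff by blast
qed

end

section \<open>Low-order coefficients of \<open>det (I + s P + s\<^sup>2 Q)\<close>\<close>

lemma coeff_prod_quadratic:
  fixes x y :: "'i \<Rightarrow> 'a :: comm_ring_1"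
  assumes "finite K"
  shows "coeff (\<Prod>i\<in>K. [:1, x i, y i:]) 0 = 1
    \<and> coeff (\<Prod>i\<in>K. [:1, x i, y i:]) 1 = (\<Sum>i\<in>K. x i)
    \<and> 2 * coeff (\<Prod>i\<in>K. [:1, x i, y i:]) 2
        = 2 * (\<Sum>i\<in>K. y i) + (\<Sum>i\<in>K. x i)\<^sup>2 - (\<Sum>i\<in>K. (x i)\<^sup>2)"
  using assms
proof (induction K rule: finite_induct)
  case (insert j K)
  then show ?case
    by (simp add: numeral_2_eq_2 power2_eq_square algebra_simps)
qed simp

definition perturbed_identity :: "nat \<Rightarrow> 'a mat \<Rightarrow> 'a mat \<Rightarrow> 'a :: comm_ring_1 poly mat" where
  "perturbed_identity n P Q = mat n n (\<lambda>(i, j). [:of_bool (i = j), P $$ (i, j), Q $$ (i, j):])"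

lemma perturbed_identity_diagonal_term:
  assumes p: "p permutes {0..<n}"
  shows "(\<Prod>i = 0..<n. perturbed_identity n P Q $$ (i, p i))
    = monom 1 (card (moved p)) * ((\<Prod>i\<in>moved p. [:P $$ (i, p i), Q $$ (i, p i):])
        * (\<Prod>i\<in>{0..<n} - moved p. [:1, P $$ (i, i), Q $$ (i, i):]))"
proof -
  have sub: "moved p \<subseteq> {0..<n}"
    by (rule moved_subset[OF p])
  have "(\<Prod>i = 0..<n. perturbed_identity n P Q $$ (i, p i))
      = (\<Prod>i\<in>{0..<n} - moved p. [:1, P $$ (i, i), Q $$ (i, i):])
        * (\<Prod>i\<in>moved p. [:0, 1:] * [:P $$ (i, p i), Q $$ (i, p i):])"
    unfolding prod.subset_diff[OF sub finite_atLeastLessThan]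
    using sub permutes_in_image[OF p]
    by (intro arg_cong2[where f = "(*)"] prod.cong) (auto simp: perturbed_identity_def moved_def)
  also have "(\<Prod>i\<in>moved p. [:0, 1:] * [:P $$ (i, p i), Q $$ (i, p i):])
      = [:0, 1:] ^ card (moved p) * (\<Prod>i\<in>moved p. [:P $$ (i, p i), Q $$ (i, p i):])"
    by (simp only: prod.distrib prod_constant)
  finally show ?thesis
    by (simp only: monom_altdef smult_1_left mult_ac)
qed

lemma coeff_perturbed_identity_diagonal_term:
  assumes "p permutes {0..<n}" and "k < card (moved p)"
  shows "coeff (\<Prod>i = 0..<n. perturbed_identity n P Q $$ (i, p i)) k = 0"
  unfolding perturbed_identity_diagonal_term[OF assms(1)] coeff_monom_mult using assms(2) by simp

lemma coeff_perturbed_identity_transposition_term: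
  assumes "a \<noteq> b" "a < n" "b < n"
  shows "coeff (\<Prod>i = 0..<n. perturbed_identity n P Q $$ (i, Transposition.transpose a b i)) 2
    = P $$ (a, b) * P $$ (b, a)"
proof -
  let ?t = "Transposition.transpose a b"
  have t: "?t permutes {0..<n}"
    using assms by (intro permutes_swap_id) auto
  have rest: "coeff (\<Prod>i\<in>{0..<n} - {a, b}. [:1, P $$ (i, i), Q $$ (i, i):]) 0 = 1"
    using coeff_prod_quadratic[of "{0..<n} - {a, b}" "\<lambda>i. P $$ (i, i)" "\<lambda>i. Q $$ (i, i)"] by simp
  have "coeff (\<Prod>i = 0..<n. perturbed_identity n P Q $$ (i, ?t i)) 2
      = coeff ((\<Prod>i\<in>{a, b}. [:P $$ (i, ?t i), Q $$ (i, ?t i):])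
          * (\<Prod>i\<in>{0..<n} - {a, b}. [:1, P $$ (i, i), Q $$ (i, i):])) 0"
    unfolding perturbed_identity_diagonal_term[OF t] moved_transpose[OF assms(1)] coeff_monom_mult
    using assms(1) by simp
  also have "\<dots> = P $$ (a, b) * P $$ (b, a)"
    unfolding coeff_mult_0 rest using assms(1) by (simp add: coeff_mult_0)
  finally show ?thesis .
qed

lemma sum_square_symmetric:
  fixes g :: "nat \<Rightarrow> nat \<Rightarrow> 'a :: comm_ring_1"
  assumes sym: "\<And>i k. g i k = g k i"
  shows "(\<Sum>i = 0..<n. \<Sum>k = 0..<n. g i k)
    = (\<Sum>i = 0..<n. g i i) + 2 * (\<Sum>a = 0..<n. \<Sum>b = Suc a..<n. g a b)"
proof (induction n)
  case (Suc n)
  have "(\<Sum>i = 0..<Suc n. \<Sum>k = 0..<Suc n. g i k)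
      = (\<Sum>i = 0..<n. \<Sum>k = 0..<n. g i k) + (\<Sum>i = 0..<n. g i n) + ((\<Sum>k = 0..<n. g n k) + g n n)"
    by (simp add: sum.distrib)
  moreover have "(\<Sum>k = 0..<n. g n k) = (\<Sum>i = 0..<n. g i n)"
    using sym by simp
  moreover have "(\<Sum>a = 0..<Suc n. \<Sum>b = Suc a..<Suc n. g a b)
      = (\<Sum>a = 0..<n. \<Sum>b = Suc a..<n. g a b) + (\<Sum>a = 0..<n. g a n)"
    by (simp add: sum.distrib)
  ultimately show ?case
    using Suc by (simp add: algebra_simps)
qed simp

lemma coeff_det_perturbed_identity_eq:
  "coeff (det (perturbed_identity n P Q)) k
    = coeff (\<Prod>i = 0..<n. [:1, P $$ (i, i), Q $$ (i, i):]) k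
      + (\<Sum>p\<in>{p. p permutes {0..<n}} - {id}.
          signof p * coeff (\<Prod>i = 0..<n. perturbed_identity n P Q $$ (i, p i)) k)"
proof -
  let ?t = "\<lambda>p. \<Prod>i = 0..<n. perturbed_identity n P Q $$ (i, p i)"
  have "det (perturbed_identity n P Q) = (\<Sum>p\<in>{p. p permutes {0..<n}}. signof p * ?t p)"
    by (rule det_def') (simp add: perturbed_identity_def)
  then have "coeff (det (perturbed_identity n P Q)) k = (\<Sum>p\<in>{p. p permutes {0..<n}}. signof p * coeff (?t p) k)"
    by (simp add: coeff_sum of_int_poly)
  moreover have "?t id = (\<Prod>i = 0..<n. [:1, P $$ (i, i), Q $$ (i, i):])"
    by (simp add: perturbed_identity_def)
  ultimately show ?thesis
    by (simp add: sum.remove[of _ id] finite_permutations permutes_id)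
qed

lemma coeff_1_det_perturbed_identity:
  assumes "P \<in> carrier_mat n n"
  shows "coeff (det (perturbed_identity n P Q)) 1 = mat_trace P"
proof -
  have "coeff (\<Prod>i = 0..<n. perturbed_identity n P Q $$ (i, p i)) 1 = 0"
    if "p \<in> {p. p permutes {0..<n}} - {id}" for p
    using that two_le_card_moved[of p "{0..<n}"] by (intro coeff_perturbed_identity_diagonal_term) auto
  then show ?thesis
    using assms coeff_prod_quadratic[of "{0..<n}" "\<lambda>i. P $$ (i, i)" "\<lambda>i. Q $$ (i, i)"]
    unfolding coeff_det_perturbed_identity_eq mat_trace_def by simp
qed

text \<open>Besides the identity, exactly the transpositions contribute to the coefficient of \<open>s\<^sup>2\<close>.\<close>

lemma coeff_2_det_perturbed_identity:
  assumes P: "P \<in> carrier_mat n n" and Q: "Q \<in> carrier_mat n n"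
  shows "2 * coeff (det (perturbed_identity n P Q)) 2
    = 2 * mat_trace Q + (mat_trace P)\<^sup>2 - mat_trace (P * P)"
proof -
  let ?t = "\<lambda>p. \<Prod>i = 0..<n. perturbed_identity n P Q $$ (i, p i)"
  let ?Perm = "{p. p permutes {0..<n}}" and ?D = "Sigma {0..<n} (\<lambda>a. {Suc a..<n})"
  let ?T2 = "{p. p permutes {0..<n} \<and> card (moved p) = 2}"
  have "(\<Sum>p\<in>?Perm - {id}. signof p * coeff (?t p) 2) = (\<Sum>p\<in>?T2. signof p * coeff (?t p) 2)"
  proof (rule sum.mono_neutral_right)
    show "\<forall>p\<in>?Perm - {id} - ?T2. signof p * coeff (?t p) 2 = 0"
    proof
      fix p assume "p \<in> ?Perm - {id} - ?T2"
      then have "coeff (?t p) 2 = 0"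
        using two_le_card_moved[of p "{0..<n}"] by (intro coeff_perturbed_identity_diagonal_term) auto
      then show "signof p * coeff (?t p) 2 = 0"
        by simp
    qed
  qed (auto simp: finite_permutations moved_def)
  also have "\<dots> = - (\<Sum>(a, b)\<in>?D. P $$ (a, b) * P $$ (b, a))"
    unfolding sum.reindex_bij_betw[OF bij_betw_transpositions, symmetric] sum_negf[symmetric]
    by (intro sum.cong) (auto simp: sign_swap_id coeff_perturbed_identity_transposition_term)
  finally have c2: "coeff (det (perturbed_identity n P Q)) 2
      = coeff (\<Prod>i = 0..<n. [:1, P $$ (i, i), Q $$ (i, i):]) 2 - (\<Sum>(a, b)\<in>?D. P $$ (a, b) * P $$ (b, a))"
    unfolding coeff_det_perturbed_identity_eq by simp
  have trace_square: "mat_trace (P * P)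
      = (\<Sum>i = 0..<n. (P $$ (i, i))\<^sup>2) + 2 * (\<Sum>(a, b)\<in>?D. P $$ (a, b) * P $$ (b, a))"
    using P sum_square_symmetric[of "\<lambda>i k. P $$ (i, k) * P $$ (k, i)" n]
    unfolding mat_trace_def by (simp add: scalar_prod_def power2_eq_square mult.commute sum.Sigma)
  have id2: "2 * coeff (\<Prod>i = 0..<n. [:1, P $$ (i, i), Q $$ (i, i):]) 2
      = 2 * (\<Sum>i = 0..<n. Q $$ (i, i)) + (\<Sum>i = 0..<n. P $$ (i, i))\<^sup>2 - (\<Sum>i = 0..<n. (P $$ (i, i))\<^sup>2)"
    using coeff_prod_quadratic[of "{0..<n}" "\<lambda>i. P $$ (i, i)" "\<lambda>i. Q $$ (i, i)"] by simp
  show ?thesis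
    unfolding c2 trace_square right_diff_distrib id2 using P Q by (simp add: mat_trace_def algebra_simps)
qed

lemma sum_quadratic_poly: "(\<Sum>k\<in>K. [:a k, b k, c k:]) = [:\<Sum>k\<in>K. a k, \<Sum>k\<in>K. b k, \<Sum>k\<in>K. c k:]"
  by (induction K rule: infinite_finite_induct) simp_all

lemma coeff_det_quadratic_pencil:
  fixes X B C Y :: "'a :: comm_ring_1 mat"
  assumes X: "X \<in> carrier_mat n n" and B: "B \<in> carrier_mat n n" and C: "C \<in> carrier_mat n n"
    and Y: "Y \<in> carrier_mat n n" and inverse: "Y * X = 1\<^sub>m n"
  defines "M \<equiv> mat n n (\<lambda>(i, j). [:X $$ (i, j), B $$ (i, j), C $$ (i, j):])"
  shows "coeff (det M) 1 = det X * mat_trace (B * Y)"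
    and "2 * coeff (det M) 2
      = det X * (2 * mat_trace (C * Y) + (mat_trace (B * Y))\<^sup>2 - mat_trace (B * Y * (B * Y)))"
proof -
  define P Q where "P = B * Y" and "Q = C * Y"
  have PQ: "P \<in> carrier_mat n n" "Q \<in> carrier_mat n n" "P * X = B" "Q * X = C"
    unfolding P_def Q_def using X B C Y inverse by (simp_all add: assoc_mult_mat[of _ n n Y n X n])
  let ?N = "perturbed_identity n P Q" and ?X = "map_mat (\<lambda>a. [:a:]) X"
  interpret const_poly: comm_ring_hom "\<lambda>a :: 'a. [:a:]"
    by unfold_locales (simp_all add: one_pCons)
  have "M = ?N * ?X"
  proof (rule eq_matI)
    fix i j assume "i < dim_row (?N * ?X)" "j < dim_col (?N * ?X)"
    then have ij: "i < n" "j < n"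
      using X by (simp_all add: perturbed_identity_def)
    have "(?N * ?X) $$ (i, j) = (\<Sum>k = 0..<n. ?N $$ (i, k) * [:X $$ (k, j):])"
      using ij X by (simp add: scalar_prod_def perturbed_identity_def)
    also have "\<dots> = (\<Sum>k = 0..<n. [:if i = k then X $$ (k, j) else 0,
        P $$ (i, k) * X $$ (k, j), Q $$ (i, k) * X $$ (k, j):])"
      using ij by (intro sum.cong) (auto simp: perturbed_identity_def mult.commute)
    also have "\<dots> = [:X $$ (i, j), (P * X) $$ (i, j), (Q * X) $$ (i, j):]"
      unfolding sum_quadratic_poly using ij X PQ(1,2) by (simp add: scalar_prod_def)
    also have "\<dots> = M $$ (i, j)"
      unfolding M_def PQ using ij by simp
    finally show "M $$ (i, j) = (?N * ?X) $$ (i, j)" ..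
  qed (use X in \<open>simp_all add: M_def perturbed_identity_def\<close>)
  then have "det M = det ?N * det ?X"
    by (simp add: det_mult[of _ n] X perturbed_identity_def)
  also have "det ?X = [:det X:]"
    by (rule const_poly.hom_det)
  finally have "det M = det ?N * [:det X:]" .
  then show "coeff (det M) 1 = det X * mat_trace (B * Y)"
    and "2 * coeff (det M) 2
      = det X * (2 * mat_trace (C * Y) + (mat_trace (B * Y))\<^sup>2 - mat_trace (B * Y * (B * Y)))"
    using coeff_1_det_perturbed_identity[OF PQ(1)] coeff_2_det_perturbed_identity[OF PQ(1,2)]
    unfolding P_def Q_def by (simp_all add: ac_simps)
qed

context enumeration
begin

lemma coeff_det_to_mat_pencil:
  fixes A B C :: "'a \<Rightarrow> 'a \<Rightarrow> real"
  assumes "det (to_mat n h A) \<noteq> 0"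
  defines "M \<equiv> minv S A"
  shows "coeff (det (to_mat n h (\<lambda>u v. [:A u v, B u v, C u v:]))) 1
      = det (to_mat n h A) * mtrace S (mmult S B M)"
    and "2 * coeff (det (to_mat n h (\<lambda>u v. [:A u v, B u v, C u v:]))) 2
      = det (to_mat n h A) * (2 * mtrace S (mmult S C M) + (mtrace S (mmult S B M))\<^sup>2
          - mtrace S (mmult S (mmult S (mmult S B M) B) M))"
proof -
  have pencil: "to_mat n h (\<lambda>u v. [:A u v, B u v, C u v:])
      = mat n n (\<lambda>(i, j). [:to_mat n h A $$ (i, j), to_mat n h B $$ (i, j), to_mat n h C $$ (i, j):])"
    by (rule eq_matI) simp_all
  have inverse: "to_mat n h M * to_mat n h A = 1\<^sub>m n"
    unfolding M_def by (rule to_mat_minv[OF assms(1)])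
  have "mtrace S (mmult S (mmult S (mmult S B M) B) M)
      = mat_trace (to_mat n h B * to_mat n h M * (to_mat n h B * to_mat n h M))"
    unfolding mtrace_eq_mat_trace to_mat_mmult by (metis assoc_mult_mat mult_carrier_mat to_mat_carrier)
  then show "coeff (det (to_mat n h (\<lambda>u v. [:A u v, B u v, C u v:]))) 1
      = det (to_mat n h A) * mtrace S (mmult S B M)"
    and "2 * coeff (det (to_mat n h (\<lambda>u v. [:A u v, B u v, C u v:]))) 2
      = det (to_mat n h A) * (2 * mtrace S (mmult S C M) + (mtrace S (mmult S B M))\<^sup>2
          - mtrace S (mmult S (mmult S (mmult S B M) B) M))"
    using coeff_det_quadratic_pencil[OF to_mat_carrier to_mat_carrier to_mat_carrier to_mat_carrier inverse]
    unfolding pencil mtrace_eq_mat_trace to_mat_mmult by simp_all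
qed

end

section \<open>Expectation and variance of \<open>R(T)\<close>\<close>

lemma tree_var_eq:
  assumes "(\<Sum>T\<in>spanning_trees V E. tree_weight w T) \<noteq> 0"
  shows "tree_var V E w f = tree_expect V E w (\<lambda>T. (f T)\<^sup>2) - (tree_expect V E w f)\<^sup>2"
proof -
  let ?ST = "spanning_trees V E"
  define Z where "Z = (\<Sum>T\<in>?ST. tree_weight w T)"
  define \<mu> where "\<mu> = tree_expect V E w f"
  have "(\<Sum>T\<in>?ST. tree_weight w T * (f T - \<mu>)\<^sup>2)
      = (\<Sum>T\<in>?ST. tree_weight w T * (f T)\<^sup>2) - 2 * \<mu> * (\<Sum>T\<in>?ST. tree_weight w T * f T) + \<mu>\<^sup>2 * Z"
    unfolding Z_def
    by (simp add: power2_eq_square algebra_simps sum.distrib sum_subtractf sum_distrib_left)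
  also have "\<dots> = (\<Sum>T\<in>?ST. tree_weight w T * (f T)\<^sup>2) - \<mu>\<^sup>2 * Z"
    using assms unfolding \<mu>_def tree_expect_def Z_def by (simp add: power2_eq_square field_simps)
  finally show ?thesis
    using assms unfolding tree_var_def \<mu>_def[symmetric] unfolding tree_expect_def Z_def[symmetric]
    by (simp add: field_simps)
qed

lemma coeff_tree_polynomial:
  fixes w \<omega> :: "'a set \<Rightarrow> real" and \<T> :: "'a set set set"
  assumes "\<And>T. T \<in> \<T> \<Longrightarrow> finite T"
  defines "p \<equiv> (\<Sum>T\<in>\<T>. \<Prod>e\<in>T. [:w e, w e * \<omega> e, w e * (\<omega> e)\<^sup>2 / 2:])"
  shows "coeff p 1 = (\<Sum>T\<in>\<T>. tree_weight w T * R_val \<omega> T)"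
    and "2 * coeff p 2 = (\<Sum>T\<in>\<T>. tree_weight w T * (R_val \<omega> T)\<^sup>2)"
proof -
  have factor: "(\<Prod>e\<in>T. [:w e, w e * \<omega> e, w e * (\<omega> e)\<^sup>2 / 2:])
      = smult (tree_weight w T) (\<Prod>e\<in>T. [:1, \<omega> e, (\<omega> e)\<^sup>2 / 2:])" for T
    unfolding tree_weight_def prod_smult[symmetric] by simp
  show "coeff p 1 = (\<Sum>T\<in>\<T>. tree_weight w T * R_val \<omega> T)"
    unfolding p_def coeff_sum factor R_val_def
    using coeff_prod_quadratic[OF assms(1), of _ \<omega> "\<lambda>e. (\<omega> e)\<^sup>2 / 2"] by (intro sum.cong) auto
  have "2 * coeff (\<Prod>e\<in>T. [:1, \<omega> e, (\<omega> e)\<^sup>2 / 2:]) 2 = (R_val \<omega> T)\<^sup>2" if "T \<in> \<T>" for T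
    using coeff_prod_quadratic[OF assms(1)[OF that], of \<omega> "\<lambda>e. (\<omega> e)\<^sup>2 / 2"]
    unfolding R_val_def by (simp add: sum_divide_distrib[symmetric])
  then show "2 * coeff p 2 = (\<Sum>T\<in>\<T>. tree_weight w T * (R_val \<omega> T)\<^sup>2)"
    unfolding p_def coeff_sum factor sum_distrib_left
    by (intro sum.cong) (auto simp: mult.left_commute[of 2])
qed

context rooted_enumeration
begin

lemma spanning_tree_moments:
  fixes w \<omega> :: "'a set \<Rightarrow> real"
  defines "Z \<equiv> \<Sum>T\<in>spanning_trees V E. tree_weight w T"
    and "S \<equiv> V - {r}"
    and "LG \<equiv> reduced r (laplacian V E w)"
    and "L1 \<equiv> reduced r (laplacian V E (\<lambda>e. w e * \<omega> e))"
    and "L2 \<equiv> reduced r (laplacian V E (\<lambda>e. w e * (\<omega> e)\<^sup>2))"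
  assumes "Z \<noteq> 0"
  shows "(\<Sum>T\<in>spanning_trees V E. tree_weight w T * R_val \<omega> T) = Z * mtrace S (mmult S L1 (minv S LG))"
    and "(\<Sum>T\<in>spanning_trees V E. tree_weight w T * (R_val \<omega> T)\<^sup>2)
      = Z * (mtrace S (mmult S L2 (minv S LG)) + (mtrace S (mmult S L1 (minv S LG)))\<^sup>2
          - mtrace S (mmult S (mmult S (mmult S L1 (minv S LG)) L1) (minv S LG)))"
proof -
  let ?half = "reduced r (laplacian V E (\<lambda>e. w e * (\<omega> e)\<^sup>2 / 2))"
  have det: "det (to_mat n h LG) = Z"
    unfolding LG_def Z_def tree_weight_def by (rule matrix_tree)
  have half: "?half = (\<lambda>u v. L2 u v / 2)"
    using laplacian_scale[of V E "1 / 2" "\<lambda>e. w e * (\<omega> e)\<^sup>2"]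
    unfolding L2_def reduced_def by (auto intro!: ext)
  have finite_trees: "finite T" if "T \<in> spanning_trees V E" for T
    using that finite_edges[OF graph root] finite_subset unfolding spanning_trees_def by blast
  have tree_sum: "det (to_mat n h (\<lambda>u v. [:LG u v, L1 u v, ?half u v:]))
      = (\<Sum>T\<in>spanning_trees V E. \<Prod>e\<in>T. [:w e, w e * \<omega> e, w e * (\<omega> e)\<^sup>2 / 2:])"
    unfolding LG_def L1_def by (rule det_laplacian_pencil)
  note pencil = coeff_det_to_mat_pencil[of LG L1 ?half, unfolded tree_sum det, folded S_def]
  note trees = coeff_tree_polynomial[of "spanning_trees V E", OF finite_trees, of w \<omega>]
  show "(\<Sum>T\<in>spanning_trees V E. tree_weight w T * R_val \<omega> T) = Z * mtrace S (mmult S L1 (minv S LG))"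
    using pencil(1) trees(1) det assms(6) by simp
  show "(\<Sum>T\<in>spanning_trees V E. tree_weight w T * (R_val \<omega> T)\<^sup>2)
      = Z * (mtrace S (mmult S L2 (minv S LG)) + (mtrace S (mmult S L1 (minv S LG)))\<^sup>2
          - mtrace S (mmult S (mmult S (mmult S L1 (minv S LG)) L1) (minv S LG)))"
    using pencil(2) trees(2) det assms(6) unfolding half mtrace_mmult_half by simp
qed

theorem expectation_variance:
  fixes w \<omega> :: "'a set \<Rightarrow> real"
  assumes "connected_graph V E" and "\<And>e. e \<in> E \<Longrightarrow> w e > 0"
  defines "S \<equiv> V - {r}"
    and "LG \<equiv> reduced r (laplacian V E w)"
    and "L1 \<equiv> reduced r (laplacian V E (\<lambda>e. w e * \<omega> e))"
    and "L2 \<equiv> reduced r (laplacian V E (\<lambda>e. w e * (\<omega> e)\<^sup>2))"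
  shows "tree_expect V E w (R_val \<omega>) = mtrace S (mmult S L1 (minv S LG)) \<and>
         tree_var V E w (R_val \<omega>) =
           mtrace S (mmult S (\<lambda>i j. L2 i j - mmult S (mmult S L1 (minv S LG)) L1 i j) (minv S LG))"
proof -
  let ?Z = "\<Sum>T\<in>spanning_trees V E. tree_weight w T"
  have "?Z > 0"
  proof (rule sum_pos)
    show "finite (spanning_trees V E)"
      by (rule finite_spanning_trees[OF graph root])
    show "spanning_trees V E \<noteq> {}"
      by (rule spanning_trees_nonempty[OF graph root assms(1)])
    show "tree_weight w T > 0" if "T \<in> spanning_trees V E" for T
      using that assms(2) unfolding tree_weight_def spanning_trees_def by (intro prod_pos) blast
  qed
  note moments = spanning_tree_moments[of w \<omega>, folded S_def LG_def L1_def L2_def]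
  have "tree_expect V E w (R_val \<omega>) = mtrace S (mmult S L1 (minv S LG))"
    using moments(1) \<open>?Z > 0\<close> unfolding tree_expect_def by simp
  moreover have "tree_expect V E w (\<lambda>T. (R_val \<omega> T)\<^sup>2)
      = mtrace S (mmult S L2 (minv S LG)) + (mtrace S (mmult S L1 (minv S LG)))\<^sup>2
        - mtrace S (mmult S (mmult S (mmult S L1 (minv S LG)) L1) (minv S LG))"
    using moments(2) \<open>?Z > 0\<close> unfolding tree_expect_def by simp
  ultimately show ?thesis
    using tree_var_eq[where f = "R_val \<omega>"] \<open>?Z > 0\<close> by (simp add: mtrace_mmult_diff)
qed

end

theorem corollary2:
  fixes V :: "'a set" and E :: "'a set set"
    and w \<omega> :: "'a set \<Rightarrow> real" and r :: 'a
  assumes "simple_graph V E"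
    and "connected_graph V E"
    and "\<And>e. e \<in> E \<Longrightarrow> w e > 0"
    and "r \<in> V"
  defines "S \<equiv> V - {r}"
    and "LG \<equiv> reduced r (laplacian V E w)"
    and "L1 \<equiv> reduced r (laplacian V E (\<lambda>e. w e * \<omega> e))"
    and "L2 \<equiv> reduced r (laplacian V E (\<lambda>e. w e * (\<omega> e)\<^sup>2))"
  shows "tree_expect V E w (R_val \<omega>) = mtrace S (mmult S L1 (minv S LG)) \<and>
         tree_var V E w (R_val \<omega>) =
           mtrace S (mmult S (\<lambda>i j. L2 i j - mmult S (mmult S L1 (minv S LG)) L1 i j) (minv S LG))"
proof -
  obtain h where "bij_betw h {0..<card (V - {r})} (V - {r})"
    using ex_bij_betw_nat_finite finite_vertices[OF assms(1,4)] by blast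
  then interpret rooted_enumeration V E r "card (V - {r})" h
    using assms(1,4) by unfold_locales
  show ?thesis
    unfolding S_def LG_def L1_def L2_def by (rule expectation_variance[OF assms(2,3)])
qed

end
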